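(* Let $p$ be a prime and $G=S^1\times C_p$. Then $G$ is not a BU-group of type I: there exist fixed-point-free orthogonal $G$-representations $V,W$ with $\dim V>\dim W$ and a $G$-map $f:S(V)\to S(W)$. (For instance, $V=2V_{1,0}\oplus 2V_{1,1}$ and $W=2V_{p,0}\oplus V_{0,1}$.)
   Context: Let $a$ be a generator of $C_p$ and $\xi_p=e^{2\pi\sqrt{-1}/p}$. For $k\in\mathbb{Z}$ and $l\in\mathbb{Z}/p$, $V_{k,l}$ is the $1$-dimensional unitary $G$-representation on $\mathbb{C}$ with $(t,a^j)\cdot z=t^k\xi_p^{jl}z$ for $t\in S^1$, regarded as a real $2$-dimensional orthogonal representation. An orthogonal $G$-representation $V$ is fixed-point-free if $V^G=0$; $S(V)$ denotes its unit sphere; a $G$-map is a continuous $G$-equivariant map. $G$ is a BU-group of type I if for all fixed-point-free orthogonal $G$-representations $V,W$, the existence of a $G$-map $S(V)\to S(W)$ implies $\dim V\le\dim W$. *)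

theory Defs
  imports "HOL-Analysis.Analysis"
begin

text \<open>The group G = S^1 x C_p: pairs (t, j) with t a unit complex number and
  j < p standing for a^j; multiplication (t,j)(s,k) = (ts, (j+k) mod p).\<close>

definition Gcar :: "nat \<Rightarrow> (complex \<times> nat) set" where
  "Gcar p = {(t, j). cmod t = 1 \<and> j < p}"

definition Gmult :: "nat \<Rightarrow> complex \<times> nat \<Rightarrow> complex \<times> nat \<Rightarrow> complex \<times> nat" where
  "Gmult p g h = (fst g * fst h, (snd g + snd h) mod p)"

definition Gone :: "complex \<times> nat" where
  "Gone = (1, 0)"

definition Rn :: "nat \<Rightarrow> (nat \<Rightarrow> real) set" where
  "Rn n = {x. \<forall>i\<ge>n. x i = 0}"

definition inner_n :: "nat \<Rightarrow> (nat \<Rightarrow> real) \<Rightarrow> (nat \<Rightarrow> real) \<Rightarrow> real" where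
  "inner_n n x y = (\<Sum>i<n. x i * y i)"

definition sphere_n :: "nat \<Rightarrow> (nat \<Rightarrow> real) set" where
  "sphere_n n = {x \<in> Rn n. inner_n n x x = 1}"

definition orth_rep :: "nat \<Rightarrow> nat \<Rightarrow> (complex \<times> nat \<Rightarrow> (nat \<Rightarrow> real) \<Rightarrow> (nat \<Rightarrow> real)) \<Rightarrow> bool" where
  "orth_rep p n \<rho> \<longleftrightarrow>
     (\<forall>g\<in>Gcar p. \<forall>x\<in>Rn n. \<rho> g x \<in> Rn n) \<and>
     (\<forall>g\<in>Gcar p. \<forall>x\<in>Rn n. \<forall>y\<in>Rn n. \<forall>a b::real.
         \<rho> g (\<lambda>i. a * x i + b * y i) = (\<lambda>i. a * \<rho> g x i + b * \<rho> g y i)) \<and>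
     (\<forall>g\<in>Gcar p. \<forall>x\<in>Rn n. \<forall>y\<in>Rn n. inner_n n (\<rho> g x) (\<rho> g y) = inner_n n x y) \<and>
     (\<forall>x\<in>Rn n. \<rho> Gone x = x) \<and>
     (\<forall>g\<in>Gcar p. \<forall>h\<in>Gcar p. \<forall>x\<in>Rn n. \<rho> (Gmult p g h) x = \<rho> g (\<rho> h x)) \<and>
     continuous_on (Gcar p \<times> Rn n) (\<lambda>(g, x). \<rho> g x)"

definition fixed_point_free :: "nat \<Rightarrow> nat \<Rightarrow> (complex \<times> nat \<Rightarrow> (nat \<Rightarrow> real) \<Rightarrow> (nat \<Rightarrow> real)) \<Rightarrow> bool" where
  "fixed_point_free p n \<rho> \<longleftrightarrow> (\<forall>x\<in>Rn n. (\<forall>g\<in>Gcar p. \<rho> g x = x) \<longrightarrow> x = (\<lambda>i. 0))"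

definition G_map :: "nat \<Rightarrow> nat \<Rightarrow> (complex \<times> nat \<Rightarrow> (nat \<Rightarrow> real) \<Rightarrow> (nat \<Rightarrow> real)) \<Rightarrow>
    nat \<Rightarrow> (complex \<times> nat \<Rightarrow> (nat \<Rightarrow> real) \<Rightarrow> (nat \<Rightarrow> real)) \<Rightarrow>
    ((nat \<Rightarrow> real) \<Rightarrow> (nat \<Rightarrow> real)) \<Rightarrow> bool" where
  "G_map p n \<rho> m \<sigma> f \<longleftrightarrow>
     continuous_on (sphere_n n) f \<and> f ` sphere_n n \<subseteq> sphere_n m \<and>
     (\<forall>g\<in>Gcar p. \<forall>x\<in>sphere_n n. f (\<rho> g x) = \<sigma> g (f x))"

definition BU_group_type_I :: "nat \<Rightarrow> bool" where
  "BU_group_type_I p \<longleftrightarrow>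
     (\<forall>n m \<rho> \<sigma>. orth_rep p n \<rho> \<and> orth_rep p m \<sigma> \<and>
        fixed_point_free p n \<rho> \<and> fixed_point_free p m \<sigma> \<and>
        (\<exists>f. G_map p n \<rho> m \<sigma> f) \<longrightarrow> n \<le> m)"

end

(* Write z0, z1 for the coordinates of 2V_{1,0} and z2, z3 for those of 2V_{1,1}, and let
     Phi z = (z0^p + z2^p, z1^p - (-z3)^p, cnj z0 * z2 + cnj z1 * z3)
   with values in 2V_{p,0} + V_{0,1}. Phi is equivariant: the twist xi^j of z2 and z3 dies
   in p-th powers, and the circle factor cancels in cnj z0 * z2. Phi has no zero on the
   sphere: raising the third component to the p-th power and substituting the first two
   gives -|z0|^(2p) = |z1|^(2p), forcing z = 0. Normalising Phi yields a G-map from the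
   7-sphere to the 5-sphere. *)

theory Submission
  imports Defs
begin

section \<open>Complex coordinates on R^(2n)\<close>

definition complex_coord :: "(nat \<Rightarrow> real) \<Rightarrow> nat \<Rightarrow> complex" where
  "complex_coord x k = Complex (x (2*k)) (x (2*k+1))"

definition of_complex_coords :: "nat \<Rightarrow> (nat \<Rightarrow> complex) \<Rightarrow> nat \<Rightarrow> real" where
  "of_complex_coords n c =
     (\<lambda>i. if i < 2*n then (if even i then Re (c (i div 2)) else Im (c (i div 2))) else 0)"

lemma complex_coord_of_complex_coords [simp]:
  "k < n \<Longrightarrow> complex_coord (of_complex_coords n c) k = c k"
  unfolding complex_coord_def of_complex_coords_def by (simp add: complex_eq_iff)

lemma of_complex_coords_complex_coord:
  assumes "x \<in> Rn (2*n)"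
  shows "of_complex_coords n (complex_coord x) = x"
proof
  fix i
  show "of_complex_coords n (complex_coord x) i = x i"
  proof (cases "i < 2*n")
    case True
    then show ?thesis
      unfolding of_complex_coords_def complex_coord_def by (cases "even i") (auto elim!: evenE oddE)
  next
    case False
    then show ?thesis using assms unfolding of_complex_coords_def Rn_def by auto
  qed
qed

lemma of_complex_coords_in_Rn: "of_complex_coords n c \<in> Rn (2*n)"
  unfolding of_complex_coords_def Rn_def by auto

lemma of_complex_coords_cong:
  "(\<And>k. k < n \<Longrightarrow> c k = d k) \<Longrightarrow> of_complex_coords n c = of_complex_coords n d"
  unfolding of_complex_coords_def by (auto intro!: ext)

lemma complex_coord_lincomb:
  "complex_coord (\<lambda>i. a * x i + b * y i) k = of_real a * complex_coord x k + of_real b * complex_coord y k"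
  unfolding complex_coord_def by (simp add: complex_eq_iff)

lemma of_complex_coords_lincomb:
  "of_complex_coords n (\<lambda>k. of_real a * c k + of_real b * d k)
     = (\<lambda>i. a * of_complex_coords n c i + b * of_complex_coords n d i)"
  unfolding of_complex_coords_def by (auto intro!: ext)

lemma sum_lessThan_double:
  fixes f :: "nat \<Rightarrow> 'a::comm_monoid_add"
  shows "(\<Sum>i<2*n. f i) = (\<Sum>k<n. f (2*k) + f (2*k+1))"
  by (induction n) (auto simp: ac_simps)

lemma inner_n_complex_coord:
  "inner_n (2*n) x y = (\<Sum>k<n. Re (cnj (complex_coord x k) * complex_coord y k))"
  unfolding inner_n_def sum_lessThan_double complex_coord_def by simp

lemma inner_n_self_complex_coord:
  "inner_n (2*n) x x = (\<Sum>k<n. (cmod (complex_coord x k))\<^sup>2)"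
  unfolding inner_n_complex_coord
  by (intro sum.cong refl) (metis Re_complex_of_real complex_norm_square mult.commute)

lemma continuous_on_complex_coord: "continuous_on S (\<lambda>x. complex_coord x k)"
  unfolding complex_coord_def Complex_eq
  by (intro continuous_intros continuous_on_compose2[OF continuous_on_product_coordinates]) auto

lemma continuous_on_of_complex_coords:
  assumes "\<And>k. k < n \<Longrightarrow> continuous_on S (\<lambda>x. c x k)"
  shows "continuous_on S (\<lambda>x. of_complex_coords n (c x))"
proof (rule continuous_on_coordinatewise_then_product)
  fix i
  show "continuous_on S (\<lambda>x. of_complex_coords n (c x) i)"
    unfolding of_complex_coords_def
    by (cases "i < 2*n"; cases "even i")
       (auto intro!: continuous_intros continuous_on_Re continuous_on_Im assms)
qed

section \<open>Diagonal unitary representations\<close>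

definition unitary_character :: "nat \<Rightarrow> (complex \<times> nat \<Rightarrow> complex) \<Rightarrow> bool" where
  "unitary_character p \<psi> \<longleftrightarrow>
     (\<forall>g\<in>Gcar p. cmod (\<psi> g) = 1) \<and> \<psi> Gone = 1 \<and>
     (\<forall>g\<in>Gcar p. \<forall>h\<in>Gcar p. \<psi> (Gmult p g h) = \<psi> g * \<psi> h) \<and>
     continuous_on (Gcar p) \<psi>"

text \<open>The direct sum of the characters \<open>\<lambda>g. ch g k\<close>, \<open>k < n\<close>, acting on
  C^n = R^(2n) through \<open>complex_coord\<close>.\<close>

definition diagonal_rep ::
    "(complex \<times> nat \<Rightarrow> nat \<Rightarrow> complex) \<Rightarrow> nat \<Rightarrow> complex \<times> nat \<Rightarrow> (nat \<Rightarrow> real) \<Rightarrow> nat \<Rightarrow> real" where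
  "diagonal_rep ch n g x = of_complex_coords n (\<lambda>k. ch g k * complex_coord x k)"

lemma complex_coord_diagonal_rep [simp]:
  "k < n \<Longrightarrow> complex_coord (diagonal_rep ch n g x) k = ch g k * complex_coord x k"
  unfolding diagonal_rep_def by simp

lemma cnj_mult_unit_mult:
  assumes "cmod a = 1"
  shows "cnj (a * u) * (a * v) = cnj u * v"
proof -
  have "cnj (a * u) * (a * v) = (a * cnj a) * (cnj u * v)"
    by (simp add: ac_simps)
  also have "a * cnj a = 1"
    using assms by (simp add: complex_norm_square[symmetric])
  finally show ?thesis by simp
qed

lemma inner_n_diagonal_rep:
  assumes "\<And>k. k < n \<Longrightarrow> cmod (ch g k) = 1"
  shows "inner_n (2*n) (diagonal_rep ch n g x) (diagonal_rep ch n g y) = inner_n (2*n) x y"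
  unfolding inner_n_complex_coord
  by (intro sum.cong refl) (simp del: complex_cnj_mult add: cnj_mult_unit_mult assms)

lemma orth_rep_diagonal_rep:
  assumes "\<And>k. unitary_character p (\<lambda>g. ch g k)"
  shows "orth_rep p (2*n) (diagonal_rep ch n)"
  unfolding orth_rep_def
proof (intro conjI ballI allI)
  fix g x
  show "diagonal_rep ch n g x \<in> Rn (2*n)"
    unfolding diagonal_rep_def by (rule of_complex_coords_in_Rn)
next
  fix g x y and a b :: real
  have "diagonal_rep ch n g (\<lambda>i. a * x i + b * y i)
      = of_complex_coords n (\<lambda>k. of_real a * (ch g k * complex_coord x k)
                               + of_real b * (ch g k * complex_coord y k))"
    unfolding diagonal_rep_def complex_coord_lincomb by (simp add: algebra_simps)
  then show "diagonal_rep ch n g (\<lambda>i. a * x i + b * y i)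
      = (\<lambda>i. a * diagonal_rep ch n g x i + b * diagonal_rep ch n g y i)"
    unfolding of_complex_coords_lincomb diagonal_rep_def .
next
  fix g x y assume g: "g \<in> Gcar p"
  have "cmod (ch g k) = 1" for k
    using assms[of k] g unfolding unitary_character_def by simp
  then show "inner_n (2*n) (diagonal_rep ch n g x) (diagonal_rep ch n g y) = inner_n (2*n) x y"
    by (rule inner_n_diagonal_rep)
next
  fix x assume "x \<in> Rn (2*n)"
  moreover have "ch Gone k = 1" for k
    using assms[of k] unfolding unitary_character_def by simp
  ultimately show "diagonal_rep ch n Gone x = x"
    unfolding diagonal_rep_def by (simp add: of_complex_coords_complex_coord)
next
  fix g h x assume "g \<in> Gcar p" "h \<in> Gcar p"
  then have "ch (Gmult p g h) k = ch g k * ch h k" for k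
    using assms[of k] unfolding unitary_character_def by simp
  then show "diagonal_rep ch n (Gmult p g h) x = diagonal_rep ch n g (diagonal_rep ch n h x)"
    unfolding diagonal_rep_def[of _ _ g] by (auto simp: diagonal_rep_def intro!: of_complex_coords_cong)
next
  have "continuous_on (Gcar p) (\<lambda>g. ch g k)" for k
    using assms[of k] unfolding unitary_character_def by simp
  then have "continuous_on (Gcar p \<times> Rn (2*n)) (\<lambda>z. ch (fst z) k)" for k
    by (rule continuous_on_compose2) (auto intro: continuous_on_fst continuous_on_id)
  then have "continuous_on (Gcar p \<times> Rn (2*n)) (\<lambda>z. diagonal_rep ch n (fst z) (snd z))"
    unfolding diagonal_rep_def
    by (intro continuous_on_of_complex_coords continuous_intros
          continuous_on_compose2[OF continuous_on_complex_coord[of UNIV]]) auto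
  then show "continuous_on (Gcar p \<times> Rn (2*n)) (\<lambda>(g, x). diagonal_rep ch n g x)"
    by (simp add: case_prod_beta)
qed

lemma fixed_point_free_diagonal_rep:
  assumes "\<And>k. k < n \<Longrightarrow> \<exists>g\<in>Gcar p. ch g k \<noteq> 1"
  shows "fixed_point_free p (2*n) (diagonal_rep ch n)"
  unfolding fixed_point_free_def
proof (intro ballI impI)
  fix x assume x: "x \<in> Rn (2*n)" and fixed: "\<forall>g\<in>Gcar p. diagonal_rep ch n g x = x"
  have zero: "complex_coord x k = 0" if "k < n" for k
  proof -
    obtain g where g: "g \<in> Gcar p" "ch g k \<noteq> 1" using assms[OF \<open>k < n\<close>] by blast
    have "ch g k * complex_coord x k = complex_coord (diagonal_rep ch n g x) k"
      using \<open>k < n\<close> by simp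
    also have "\<dots> = complex_coord x k"
      using fixed g by simp
    finally have "(ch g k - 1) * complex_coord x k = 0" by (simp add: algebra_simps)
    then show ?thesis using g by simp
  qed
  have "x = of_complex_coords n (complex_coord x)"
    by (rule of_complex_coords_complex_coord[OF x, symmetric])
  also have "\<dots> = of_complex_coords n (\<lambda>k. 0)"
    by (rule of_complex_coords_cong) (rule zero)
  also have "\<dots> = (\<lambda>i. 0)"
    by (auto simp: of_complex_coords_def)
  finally show "x = (\<lambda>i. 0)" .
qed

section \<open>Normalising equivariant maps\<close>

lemma orth_rep_linear:
  assumes "orth_rep p n \<sigma>" "g \<in> Gcar p" "x \<in> Rn n" "y \<in> Rn n"
  shows "\<sigma> g (\<lambda>i. a * x i + b * y i) = (\<lambda>i. a * \<sigma> g x i + b * \<sigma> g y i)"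
  using assms unfolding orth_rep_def by simp

lemma orth_rep_inner:
  assumes "orth_rep p n \<sigma>" "g \<in> Gcar p" "x \<in> Rn n" "y \<in> Rn n"
  shows "inner_n n (\<sigma> g x) (\<sigma> g y) = inner_n n x y"
  using assms unfolding orth_rep_def by simp

lemma inner_n_self_pos:
  assumes "y \<in> Rn m" "y \<noteq> (\<lambda>i. 0)"
  shows "inner_n m y y > 0"
proof -
  obtain i where "y i \<noteq> 0" using assms(2) by auto
  moreover have "\<forall>i\<ge>m. y i = 0" using assms(1) by (simp add: Rn_def)
  ultimately have "i < m" "y i \<noteq> 0" using leI by blast+
  then show ?thesis
    unfolding inner_n_def by (intro sum_pos2[of _ i]) (auto simp: zero_less_mult_iff)
qed

lemma normalized_in_sphere_n:
  assumes "y \<in> Rn m" "y \<noteq> (\<lambda>i. 0)"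
  shows "(\<lambda>i. y i / sqrt (inner_n m y y)) \<in> sphere_n m"
proof -
  have pos: "inner_n m y y > 0" using inner_n_self_pos[OF assms] .
  have "inner_n m (\<lambda>i. y i / sqrt (inner_n m y y)) (\<lambda>i. y i / sqrt (inner_n m y y))
      = inner_n m y y / (sqrt (inner_n m y y))\<^sup>2"
    unfolding inner_n_def by (simp add: sum_divide_distrib power2_eq_square)
  also have "\<dots> = 1" using pos by simp
  finally show ?thesis using assms(1) unfolding sphere_n_def Rn_def by simp
qed

lemma continuous_on_inner_n_self:
  assumes "continuous_on S F"
  shows "continuous_on S (\<lambda>x. inner_n m (F x) (F x))"
  unfolding inner_n_def
  by (intro continuous_intros continuous_on_product_then_coordinatewise[OF assms])

lemma G_map_normalize:
  assumes \<sigma>: "orth_rep p m \<sigma>"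
    and cont: "continuous_on (sphere_n n) F"
    and range: "\<And>x. x \<in> sphere_n n \<Longrightarrow> F x \<in> Rn m \<and> F x \<noteq> (\<lambda>i. 0)"
    and equiv: "\<And>g x. g \<in> Gcar p \<Longrightarrow> x \<in> sphere_n n \<Longrightarrow> F (\<rho> g x) = \<sigma> g (F x)"
  shows "G_map p n \<rho> m \<sigma> (\<lambda>x i. F x i / sqrt (inner_n m (F x) (F x)))"
  unfolding G_map_def
proof (intro conjI ballI subsetI)
  have "inner_n m (F x) (F x) \<noteq> 0" if "x \<in> sphere_n n" for x
    using inner_n_self_pos range[OF that] by force
  then show "continuous_on (sphere_n n) (\<lambda>x i. F x i / sqrt (inner_n m (F x) (F x)))"
    by (intro continuous_on_coordinatewise_then_product continuous_intros
          continuous_on_product_then_coordinatewise[OF cont] continuous_on_inner_n_self[OF cont])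
       simp
next
  fix y assume "y \<in> (\<lambda>x i. F x i / sqrt (inner_n m (F x) (F x))) ` sphere_n n"
  then show "y \<in> sphere_n m"
    using range normalized_in_sphere_n by blast
next
  fix g x assume g: "g \<in> Gcar p" and x: "x \<in> sphere_n n"
  define c where "c = 1 / sqrt (inner_n m (F x) (F x))"
  have Fx: "F x \<in> Rn m" using range[OF x] by blast
  have "\<sigma> g (\<lambda>i. c * F x i + 0 * F x i) = (\<lambda>i. c * \<sigma> g (F x) i + 0 * \<sigma> g (F x) i)"
    using orth_rep_linear[OF \<sigma> g Fx Fx] .
  moreover have "inner_n m (\<sigma> g (F x)) (\<sigma> g (F x)) = inner_n m (F x) (F x)"
    using orth_rep_inner[OF \<sigma> g Fx Fx] .
  ultimately show "(\<lambda>i. F (\<rho> g x) i / sqrt (inner_n m (F (\<rho> g x)) (F (\<rho> g x))))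
      = \<sigma> g (\<lambda>i. F x i / sqrt (inner_n m (F x) (F x)))"
    unfolding equiv[OF g x] c_def by simp
qed

section \<open>The characters of V_{k,l}\<close>

lemma power_mod_eq_power:
  fixes w :: "'a::monoid_mult"
  assumes "w ^ p = 1"
  shows "w ^ (m mod p) = w ^ m"
proof -
  have "w ^ m = (w ^ p) ^ (m div p) * w ^ (m mod p)"
    by (metis div_mult_mod_eq mult.commute power_add power_mult)
  then show ?thesis using assms by simp
qed

definition zeta :: "nat \<Rightarrow> complex" where
  "zeta p = cis (2 * pi / p)"

text \<open>\<open>character p k l\<close> is the character of the paper's \<open>V\<^sub>k\<^sub>,\<^sub>l\<close>, with \<open>\<xi>\<^sub>p = zeta p\<close>.\<close>

definition character :: "nat \<Rightarrow> nat \<Rightarrow> nat \<Rightarrow> complex \<times> nat \<Rightarrow> complex" where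
  "character p k l g = fst g ^ k * zeta p ^ (l * snd g)"

lemma zeta_power_eq_1: "p > 0 \<Longrightarrow> zeta p ^ p = 1"
  unfolding zeta_def by (simp add: Complex.DeMoivre)

lemma zeta_neq_1:
  assumes "p \<ge> 2"
  shows "zeta p \<noteq> 1"
proof
  assume "zeta p = 1"
  then have "cos (2 * pi / p) = 1"
    unfolding zeta_def by (metis cis.sel(1) one_complex.sel(1))
  moreover have "0 < 2 * pi / p" "2 * pi / p \<le> pi"
    using assms by (auto simp: field_simps)
  ultimately show False
    by (smt (verit, best) arccos_1 arccos_unique)
qed

lemma unitary_character_character:
  assumes "p > 0"
  shows "unitary_character p (character p k l)"
  unfolding unitary_character_def
proof (intro conjI ballI)
  have zeta_l: "(zeta p ^ l) ^ p = 1"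
    using zeta_power_eq_1[OF assms] by (metis mult.commute power_mult power_one)
  fix g h assume "g \<in> Gcar p" "h \<in> Gcar p"
  show "character p k l (Gmult p g h) = character p k l g * character p k l h"
    unfolding character_def Gmult_def
    using power_mod_eq_power[OF zeta_l, of "snd g + snd h"]
    by (simp add: power_mult power_add power_mult_distrib ac_simps)
next
  fix g assume "g \<in> Gcar p"
  then show "cmod (character p k l g) = 1"
    unfolding character_def Gcar_def zeta_def by (auto simp: norm_mult norm_power)
next
  show "character p k l Gone = 1"
    unfolding character_def Gone_def by simp
next
  have "continuous_on (Gcar p) (\<lambda>g. zeta p ^ (l * snd g))"
    by (rule continuous_on_compose2[OF Topological_Spaces.continuous_on_discrete[of UNIV "\<lambda>j. zeta p ^ (l * j)"]])
       (auto intro: continuous_on_snd continuous_on_id)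
  then show "continuous_on (Gcar p) (character p k l)"
    unfolding character_def by (intro continuous_intros)
qed

lemma character_nontrivial_on_circle:
  assumes "p > 0" "k > 0"
  shows "\<exists>g\<in>Gcar p. character p k l g \<noteq> 1"
proof
  show "(cis (pi / k), 0) \<in> Gcar p"
    using assms unfolding Gcar_def by simp
  show "character p k l (cis (pi / k), 0) \<noteq> 1"
    using assms unfolding character_def by (simp add: Complex.DeMoivre)
qed

lemma character_nontrivial_on_cyclic:
  assumes "p \<ge> 2"
  shows "\<exists>g\<in>Gcar p. character p 0 1 g \<noteq> 1"
proof
  show "(1, 1) \<in> Gcar p"
    using assms unfolding Gcar_def by simp
  show "character p 0 1 (1, 1) \<noteq> 1"
    using zeta_neq_1[OF assms] unfolding character_def by simp
qed

section \<open>The representations V and W and the map Phi\<close>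

definition V_char :: "nat \<Rightarrow> complex \<times> nat \<Rightarrow> nat \<Rightarrow> complex" where
  "V_char p g k = (if k < 2 then character p 1 0 g else character p 1 1 g)"

definition W_char :: "nat \<Rightarrow> complex \<times> nat \<Rightarrow> nat \<Rightarrow> complex" where
  "W_char p g k = (if k < 2 then character p p 0 g else character p 0 1 g)"

definition V_rep :: "nat \<Rightarrow> complex \<times> nat \<Rightarrow> (nat \<Rightarrow> real) \<Rightarrow> nat \<Rightarrow> real" where
  "V_rep p = diagonal_rep (V_char p) 4"

definition W_rep :: "nat \<Rightarrow> complex \<times> nat \<Rightarrow> (nat \<Rightarrow> real) \<Rightarrow> nat \<Rightarrow> real" where
  "W_rep p = diagonal_rep (W_char p) 3"

lemma orth_rep_V_rep:
  assumes "p > 0"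
  shows "orth_rep p 8 (V_rep p)"
proof -
  have "unitary_character p (\<lambda>g. V_char p g k)" for k
    using unitary_character_character[OF assms] by (cases "k < 2") (simp_all add: V_char_def)
  then show ?thesis
    using orth_rep_diagonal_rep[of p "V_char p" 4] by (simp add: V_rep_def)
qed

lemma orth_rep_W_rep:
  assumes "p > 0"
  shows "orth_rep p 6 (W_rep p)"
proof -
  have "unitary_character p (\<lambda>g. W_char p g k)" for k
    using unitary_character_character[OF assms] by (cases "k < 2") (simp_all add: W_char_def)
  then show ?thesis
    using orth_rep_diagonal_rep[of p "W_char p" 3] by (simp add: W_rep_def)
qed

lemma fixed_point_free_V_rep:
  assumes "p > 0"
  shows "fixed_point_free p 8 (V_rep p)"
proof -
  have "\<exists>g\<in>Gcar p. V_char p g k \<noteq> 1" for k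
    using character_nontrivial_on_circle[OF assms, of 1]
    by (cases "k < 2") (simp_all add: V_char_def)
  then show ?thesis
    using fixed_point_free_diagonal_rep[of 4 p "V_char p"] by (simp add: V_rep_def)
qed

lemma fixed_point_free_W_rep:
  assumes "p \<ge> 2"
  shows "fixed_point_free p 6 (W_rep p)"
proof -
  have "\<exists>g\<in>Gcar p. W_char p g k \<noteq> 1" for k
    using character_nontrivial_on_circle[of p p 0] character_nontrivial_on_cyclic[OF assms] assms
    by (cases "k < 2") (simp_all add: W_char_def)
  then show ?thesis
    using fixed_point_free_diagonal_rep[of 3 p "W_char p"] by (simp add: W_rep_def)
qed

definition phi :: "nat \<Rightarrow> (nat \<Rightarrow> real) \<Rightarrow> nat \<Rightarrow> complex" where
  "phi p x k =
     (if k = 0 then complex_coord x 0 ^ p + complex_coord x 2 ^ p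
      else if k = 1 then complex_coord x 1 ^ p - (- complex_coord x 3) ^ p
      else cnj (complex_coord x 0) * complex_coord x 2 + cnj (complex_coord x 1) * complex_coord x 3)"

definition Phi :: "nat \<Rightarrow> (nat \<Rightarrow> real) \<Rightarrow> nat \<Rightarrow> real" where
  "Phi p x = of_complex_coords 3 (phi p x)"

lemma cnj_power_mult_power: "cnj a ^ p * a ^ p = of_real ((cmod a)\<^sup>2 ^ p)"
proof -
  have "cnj a ^ p * a ^ p = (a * cnj a) ^ p" by (simp add: power_mult_distrib mult.commute)
  also have "\<dots> = of_real ((cmod a)\<^sup>2 ^ p)" by (simp add: complex_norm_square[symmetric])
  finally show ?thesis .
qed

lemma phi_system_trivial:
  fixes a b c d :: complex
  assumes p: "p > 0" and h1: "a ^ p + c ^ p = 0" and h2: "b ^ p - (- d) ^ p = 0"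
    and h3: "cnj a * c + cnj b * d = 0"
  shows "a = 0 \<and> b = 0 \<and> c = 0 \<and> d = 0"
proof -
  have "cnj a * c = cnj b * (- d)" using h3 by (simp add: eq_neg_iff_add_eq_0)
  then have "cnj a ^ p * c ^ p = cnj b ^ p * (- d) ^ p" by (metis power_mult_distrib)
  moreover have "c ^ p = - (a ^ p)" "(- d) ^ p = b ^ p" using h1 h2 by (simp_all add: eq_neg_iff_add_eq_0 add.commute)
  ultimately have "- (cnj a ^ p * a ^ p) = cnj b ^ p * b ^ p" by simp
  then have "- ((cmod a)\<^sup>2 ^ p) = (cmod b)\<^sup>2 ^ p"
    unfolding cnj_power_mult_power by (metis of_real_eq_iff of_real_minus)
  moreover have "(cmod a)\<^sup>2 ^ p \<ge> 0" "(cmod b)\<^sup>2 ^ p \<ge> 0" by simp_all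
  ultimately have "(cmod a)\<^sup>2 ^ p = 0" "(cmod b)\<^sup>2 ^ p = 0" by linarith+
  then have "a = 0" "b = 0" using p by simp_all
  moreover from this have "c = 0" "d = 0" using h1 h2 p by (simp_all add: zero_power)
  ultimately show ?thesis by simp
qed

lemma Phi_nonzero:
  assumes p: "p > 0" and x: "x \<in> sphere_n 8"
  shows "Phi p x \<noteq> (\<lambda>i. 0)"
proof
  assume "Phi p x = (\<lambda>i. 0)"
  then have "phi p x k = complex_coord (\<lambda>i. 0) k" if "k < 3" for k
    unfolding Phi_def using that by (metis complex_coord_of_complex_coords)
  then have "phi p x 0 = 0" "phi p x 1 = 0" "phi p x 2 = 0"
    by (simp_all add: complex_coord_def complex_eq_iff)
  then have "complex_coord x 0 = 0 \<and> complex_coord x 1 = 0 \<and> complex_coord x 2 = 0 \<and> complex_coord x 3 = 0"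
    by (intro phi_system_trivial[OF p]) (simp_all add: phi_def)
  moreover have "{..<4::nat} = {0, 1, 2, 3}" by auto
  ultimately have "inner_n (2*4) x x = 0"
    unfolding inner_n_self_complex_coord by simp
  moreover have "inner_n 8 x x = 1"
    using x unfolding sphere_n_def by simp
  ultimately show False by simp
qed

lemma phi_equivariant:
  assumes p: "p > 0" and g: "g \<in> Gcar p" and k: "k < 3"
  shows "phi p (V_rep p g x) k = W_char p g k * phi p x k"
proof -
  obtain t j where g_eq: "g = (t, j)" and t: "cmod t = 1"
    using g unfolding Gcar_def by auto
  define u where "u = zeta p ^ j"
  have u: "u ^ p = 1"
    unfolding u_def using zeta_power_eq_1[OF p] by (metis mult.commute power_mult power_one)
  define z where "z = complex_coord x"
  have z01: "complex_coord (V_rep p g x) i = t * z i" if "i < 2" for i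
    using that by (simp add: V_rep_def V_char_def character_def g_eq z_def)
  have z23: "complex_coord (V_rep p g x) i = t * (u * z i)" if "2 \<le> i" "i < 4" for i
    using that by (simp add: V_rep_def V_char_def character_def g_eq z_def u_def)
  have W01: "W_char p g i = t ^ p" if "i < 2" for i
    using that by (simp add: W_char_def character_def g_eq)
  have W2: "W_char p g 2 = u"
    by (simp add: W_char_def character_def g_eq u_def)
  consider "k = 0" | "k = 1" | "k = 2" using k by linarith
  then show ?thesis
  proof cases
    case 1
    have "(t * z 0) ^ p + (t * (u * z 2)) ^ p = t ^ p * (z 0 ^ p + z 2 ^ p)"
      by (simp add: power_mult_distrib u distrib_left)
    then show ?thesis
      using 1 by (simp add: phi_def z01 z23 W01 z_def)
  next
    case 2
    have "- (t * (u * z 3)) = t * (u * - z 3)" by simp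
    then have "(- (t * (u * z 3))) ^ p = t ^ p * (- z 3) ^ p"
      by (simp only: power_mult_distrib u mult_1_left)
    then have "(t * z 1) ^ p - (- (t * (u * z 3))) ^ p = t ^ p * (z 1 ^ p - (- z 3) ^ p)"
      by (simp add: power_mult_distrib right_diff_distrib)
    then show ?thesis
      using 2 by (simp add: phi_def z01 z23 W01 z_def)
  next
    case 3
    have "cnj (t * z 0) * (t * (u * z 2)) + cnj (t * z 1) * (t * (u * z 3))
        = u * (cnj (z 0) * z 2 + cnj (z 1) * z 3)"
      unfolding cnj_mult_unit_mult[OF t] by (simp add: algebra_simps)
    then show ?thesis
      using 3 by (simp add: phi_def z01 z23 W2 z_def)
  qed
qed

lemma Phi_equivariant:
  assumes "p > 0" "g \<in> Gcar p"
  shows "Phi p (V_rep p g x) = W_rep p g (Phi p x)"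
  unfolding Phi_def W_rep_def diagonal_rep_def
  by (intro of_complex_coords_cong) (simp add: phi_equivariant[OF assms])

lemma continuous_on_Phi: "continuous_on S (Phi p)"
proof -
  have "continuous_on S (\<lambda>x. phi p x k)" for k
    unfolding phi_def
    by (cases "k = 0"; cases "k = 1") (simp_all add: continuous_intros continuous_on_complex_coord)
  then show ?thesis
    unfolding Phi_def[abs_def] by (rule continuous_on_of_complex_coords)
qed

theorem proposition4p5:
  fixes p :: nat
  assumes "prime p"
  shows "\<not> BU_group_type_I p \<and>
    (\<exists>n m \<rho> \<sigma> f. orth_rep p n \<rho> \<and> orth_rep p m \<sigma> \<and>
        fixed_point_free p n \<rho> \<and> fixed_point_free p m \<sigma> \<and>
        n > m \<and> G_map p n \<rho> m \<sigma> f)"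
proof -
  have "p \<ge> 2" using assms prime_ge_2_nat by blast
  then have p: "p > 0" by simp
  have "G_map p 8 (V_rep p) 6 (W_rep p) (\<lambda>x i. Phi p x i / sqrt (inner_n 6 (Phi p x) (Phi p x)))"
  proof (rule G_map_normalize[OF orth_rep_W_rep[OF p] continuous_on_Phi])
    fix x assume "x \<in> sphere_n 8"
    then show "Phi p x \<in> Rn 6 \<and> Phi p x \<noteq> (\<lambda>i. 0)"
      using Phi_nonzero[OF p] of_complex_coords_in_Rn[of 3] unfolding Phi_def by auto
  qed (rule Phi_equivariant[OF p])
  moreover note orth_rep_V_rep[OF p] orth_rep_W_rep[OF p]
    fixed_point_free_V_rep[OF p] fixed_point_free_W_rep[OF \<open>p \<ge> 2\<close>]
  ultimately have witness: "\<exists>n m \<rho> \<sigma> f. orth_rep p n \<rho> \<and> orth_rep p m \<sigma> \<and>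
      fixed_point_free p n \<rho> \<and> fixed_point_free p m \<sigma> \<and> n > m \<and> G_map p n \<rho> m \<sigma> f"
    by (intro exI[of _ 8] exI[of _ 6]) auto
  then have "\<not> BU_group_type_I p"
    unfolding BU_group_type_I_def by (meson not_le)
  with witness show ?thesis by blast
qed

end
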